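(* Let $\mathsf{L}\in\{\mathsf{InqL},\mathbf{PT}\}$ and let $X$ be a nonempty team on a finite set $\{p_1,\dots,p_n\}$ of propositional variables. Then the formula $\Theta_X=\neg\neg\bigvee_{v\in X}(p_1^{v(p_1)}\wedge\dots\wedge p_n^{v(p_n)})$ is $\mathcal{F}$-projective in $\mathsf{L}$, where $\mathcal{F}$ is the class of all flat substitutions of $\mathsf{L}$.
   Context: Here $p^1:=p$, $p^0:=\neg p$, and a team on $V$ is a set of functions $V\to\{0,1\}$. A valuation is a function $v:\mathrm{Prop}\to\{0,1\}$ on the set Prop of propositional variables; a team is a set of valuations. Formulas of $\mathbf{PT}$: $\phi::=p\mid\bot\mid\top\mid\,=\!(\phi_1,\dots,\phi_n,\phi)\mid\neg\phi\mid\phi\wedge\phi\mid\phi\otimes\phi\mid\phi\vee\phi\mid\phi\to\phi$; formulas of $\mathsf{InqL}$ are built from $p,\bot,\top$ by $\wedge,\vee,\to$, with $\neg\phi:=\phi\to\bot$. Satisfaction on a team $X$: $X\models p$ iff $v(p)=1$ for all $v\in X$; $X\models\bot$ iff $X=\emptyset$; $X\models\top$ always; $\wedge$ conjunction; $X\models\phi\otimes\psi$ iff $X=Y\cup Z$ with $Y\models\phi$, $Z\models\psi$; $X\models\phi\vee\psi$ iff $X\models\phi$ or $X\models\psi$; $X\models\phi\to\psi$ iff every $Y\subseteq X$ with $Y\models\phi$ satisfies $\psi$; $X\models\neg\phi$ iff $\{v\}\not\models\phi$ for all $v\in X$; $X\models\,=\!(\phi_1,\dots,\phi_n,\psi)$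 iff $X\models\bigwedge_i(\phi_i\vee(\phi_i\to\bot))\to(\psi\vee(\psi\to\bot))$. For finite $\Gamma$, $\Gamma\vdash_{\mathsf L}\phi$ iff all formulas are in the language of $\mathsf L$ and every team satisfying all of $\Gamma$ satisfies $\phi$. $\phi$ is flat if for all teams $X$: $X\models\phi$ iff $\{v\}\models\phi$ for all $v\in X$. A substitution of $\mathsf L$ is a map on $\mathsf L$-formulas commuting with all connectives and atoms; it is flat if each $\sigma(p)$ is flat. For a set $\mathcal S$ of substitutions, a formula $\phi$ is $\mathcal S$-projective in $\mathsf L$ if there is $\sigma\in\mathcal S$ with $\vdash_{\mathsf L}\sigma(\phi)$, and $\phi,\sigma(p)\vdash_{\mathsf L}p$ and $\phi,p\vdash_{\mathsf L}\sigma(p)$ for all propositional variables $p$. *)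

theory Defs
  imports Main
begin

text \<open>Propositional variables are natural numbers; a valuation is a map
  nat \<Rightarrow> bool (True = 1, False = 0); a team is a set of valuations.\<close>

type_synonym valuation = "nat \<Rightarrow> bool"
type_synonym team = "valuation set"

datatype form =
    Atom nat
  | Bot
  | Top
  | Dep "form list" form
  | Neg form
  | Conj form form
  | Tensor form form
  | Disj form form
  | Imp form form

datatype logic = InqL | PT

text \<open>Team semantics. The dependence atom is given by the clause
  X |= =(phi_1..phi_n,psi) iff X |= /\_i (phi_i v (phi_i -> bot)) -> (psi v (psi -> bot)),
  unfolded directly (empty conjunction = top).\<close>

fun sat :: "team \<Rightarrow> form \<Rightarrow> bool" where
  "sat X (Atom p) = (\<forall>v\<in>X. v p)"
| "sat X Bot = (X = {})"
| "sat X Top = True"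
| "sat X (Dep fs g) =
     (\<forall>Y. Y \<subseteq> X \<longrightarrow>
        (\<forall>f\<in>set fs. sat Y f \<or> (\<forall>Z. Z \<subseteq> Y \<longrightarrow> sat Z f \<longrightarrow> Z = {})) \<longrightarrow>
        (sat Y g \<or> (\<forall>Z. Z \<subseteq> Y \<longrightarrow> sat Z g \<longrightarrow> Z = {})))"
| "sat X (Neg f) = (\<forall>v\<in>X. \<not> sat {v} f)"
| "sat X (Conj f g) = (sat X f \<and> sat X g)"
| "sat X (Tensor f g) = (\<exists>Y Z. X = Y \<union> Z \<and> sat Y f \<and> sat Z g)"
| "sat X (Disj f g) = (sat X f \<or> sat X g)"
| "sat X (Imp f g) = (\<forall>Y. Y \<subseteq> X \<longrightarrow> sat Y f \<longrightarrow> sat Y g)"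

fun in_lang :: "logic \<Rightarrow> form \<Rightarrow> bool" where
  "in_lang L (Atom p) = True"
| "in_lang L Bot = True"
| "in_lang L Top = True"
| "in_lang L (Dep fs g) = (L = PT \<and> (\<forall>f\<in>set fs. in_lang L f) \<and> in_lang L g)"
| "in_lang L (Neg f) = (L = PT \<and> in_lang L f)"
| "in_lang L (Conj f g) = (in_lang L f \<and> in_lang L g)"
| "in_lang L (Tensor f g) = (L = PT \<and> in_lang L f \<and> in_lang L g)"
| "in_lang L (Disj f g) = (in_lang L f \<and> in_lang L g)"
| "in_lang L (Imp f g) = (in_lang L f \<and> in_lang L g)"

definition neg :: "logic \<Rightarrow> form \<Rightarrow> form" where
  "neg L f = (if L = InqL then Imp f Bot else Neg f)"

definition entails :: "logic \<Rightarrow> form list \<Rightarrow> form \<Rightarrow> bool" where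
  "entails L \<Gamma> f \<longleftrightarrow>
     (\<forall>g\<in>set \<Gamma>. in_lang L g) \<and> in_lang L f \<and>
     (\<forall>X::team. (\<forall>g\<in>set \<Gamma>. sat X g) \<longrightarrow> sat X f)"

definition flat :: "form \<Rightarrow> bool" where
  "flat f \<longleftrightarrow> (\<forall>X. sat X f = (\<forall>v\<in>X. sat {v} f))"

fun subst :: "(nat \<Rightarrow> form) \<Rightarrow> form \<Rightarrow> form" where
  "subst s (Atom p) = s p"
| "subst s Bot = Bot"
| "subst s Top = Top"
| "subst s (Dep fs g) = Dep (map (subst s) fs) (subst s g)"
| "subst s (Neg f) = Neg (subst s f)"
| "subst s (Conj f g) = Conj (subst s f) (subst s g)"
| "subst s (Tensor f g) = Tensor (subst s f) (subst s g)"
| "subst s (Disj f g) = Disj (subst s f) (subst s g)"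
| "subst s (Imp f g) = Imp (subst s f) (subst s g)"

definition flat_subst :: "logic \<Rightarrow> (nat \<Rightarrow> form) \<Rightarrow> bool" where
  "flat_subst L s \<longleftrightarrow> (\<forall>p. in_lang L (s p) \<and> flat (s p))"

definition projective :: "logic \<Rightarrow> ((nat \<Rightarrow> form) \<Rightarrow> bool) \<Rightarrow> form \<Rightarrow> bool" where
  "projective L S f \<longleftrightarrow>
     (\<exists>s. S s \<and> entails L [] (subst s f) \<and>
          (\<forall>p. entails L [f, s p] (Atom p) \<and> entails L [f, Atom p] (s p)))"

text \<open>p^1 = p, p^0 = neg p.\<close>

definition lit :: "logic \<Rightarrow> nat \<Rightarrow> bool \<Rightarrow> form" where
  "lit L p b = (if b then Atom p else neg L (Atom p))"

definition big_conj :: "form list \<Rightarrow> form" where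
  "big_conj fs = foldr Conj fs Top"

definition big_disj :: "form list \<Rightarrow> form" where
  "big_disj fs = foldr Disj fs Bot"

text \<open>Theta_X for the team X = set xs (restricted to the variables ps = [p_1..p_n]).\<close>

definition Theta :: "logic \<Rightarrow> nat list \<Rightarrow> valuation list \<Rightarrow> form" where
  "Theta L ps xs =
     neg L (neg L (big_disj (map (\<lambda>v. big_conj (map (\<lambda>p. lit L p (v p)) ps)) xs)))"

end

theory Submission
  imports Defs
begin

text \<open>On singleton teams the semantics is classical, so a substitution \<open>s\<close> acts on a singleton
  team \<open>{v}\<close> as the valuation \<open>p \<mapsto> {v} \<Turnstile> s p\<close>. For a negated formula \<open>T = neg L f\<close>,
  which is flat, fix a valuation \<open>x\<^sub>0\<close> satisfying \<open>T\<close> and put \<open>s p = T \<rightarrow> p\<close> if \<open>x\<^sub>0 p\<close> and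
  \<open>s p = T \<and> p\<close> otherwise. Then \<open>s\<close> is flat, it acts as the identity on valuations satisfying
  \<open>T\<close> and sends all others to \<open>x\<^sub>0\<close>; hence \<open>s T\<close> is valid and \<open>s p\<close> agrees with \<open>p\<close> under \<open>T\<close>.
  \<open>\<Theta>\<^sub>X\<close> is such a formula, satisfied by any member of \<open>X\<close>.\<close>

lemma sat_empty: "sat {} f"
  by (induction f) auto

lemma sat_downward_closed: "sat X f \<Longrightarrow> Y \<subseteq> X \<Longrightarrow> sat Y f"
proof (induction f arbitrary: X Y)
  case (Tensor f g)
  then obtain X1 X2 where "X = X1 \<union> X2" "sat X1 f" "sat X2 g" by auto
  then have "Y = (Y \<inter> X1) \<union> (Y \<inter> X2)" "sat (Y \<inter> X1) f" "sat (Y \<inter> X2) g"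
    using Tensor.prems(2) Tensor.IH by auto
  then show ?case by auto
qed auto

lemma sat_singleton_Imp [simp]: "sat {v} (Imp f g) = (sat {v} f \<longrightarrow> sat {v} g)"
  by (auto simp: subset_singleton_iff sat_empty)

lemma sat_neg: "sat X (neg L f) = (\<forall>v\<in>X. \<not> sat {v} f)"
proof (cases L)
  case InqL
  have "(\<forall>Y\<subseteq>X. sat Y f \<longrightarrow> Y = {}) \<longleftrightarrow> (\<forall>v\<in>X. \<not> sat {v} f)"
    by (auto dest: sat_downward_closed[of _ f "{_}"])
  with InqL show ?thesis unfolding neg_def by simp
qed (simp add: neg_def)

lemma sat_singleton_Tensor [simp]: "sat {v} (Tensor f g) = (sat {v} f \<or> sat {v} g)"
proof
  assume "sat {v} (Tensor f g)"
  then obtain Y Z where "{v} = Y \<union> Z" "sat Y f" "sat Z g" by auto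
  then have "Y = {v} \<or> Z = {v}"
    by (metis Un_empty insert_not_empty subset_singleton_iff sup_ge1 sup_ge2)
  with \<open>sat Y f\<close> \<open>sat Z g\<close> show "sat {v} f \<or> sat {v} g" by metis
next
  assume "sat {v} f \<or> sat {v} g"
  then show "sat {v} (Tensor f g)"
  proof
    assume "sat {v} f"
    then show ?thesis using sat_empty[of g] by (simp only: sat.simps) (metis sup_bot_right)
  next
    assume "sat {v} g"
    then show ?thesis using sat_empty[of f] by (simp only: sat.simps) (metis sup_bot_left)
  qed
qed

lemma sat_singleton_Dep [simp]: "sat {v} (Dep fs g)"
  by (auto simp: subset_singleton_iff)

lemma sat_singleton_subst: "sat {v} (subst s f) = sat {\<lambda>p. sat {v} (s p)} f"
  \<comment> \<open>the general clauses must yield to the singleton rules; the one for \<open>Tensor\<close> makes simp loop\<close>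
  by (induction f) (simp_all del: sat.simps(4,7,9))

lemma flat_Atom: "flat (Atom p)"
  unfolding flat_def by simp

lemma flat_Conj: "flat f \<Longrightarrow> flat g \<Longrightarrow> flat (Conj f g)"
  unfolding flat_def sat.simps(6) by blast

lemma flat_Imp:
  assumes "flat f" and "flat g"
  shows "flat (Imp f g)"
  unfolding flat_def
proof (intro allI iffI ballI)
  fix X v assume "sat X (Imp f g)" and "v \<in> X"
  then show "sat {v} (Imp f g)" using sat_downward_closed by blast
next
  fix X assume singletons: "\<forall>v\<in>X. sat {v} (Imp f g)"
  show "sat X (Imp f g)"
    unfolding sat.simps(9)
  proof (intro allI impI)
    fix Y assume "Y \<subseteq> X" and "sat Y f"
    then have "\<forall>v\<in>Y. sat {v} g"
      using singletons \<open>flat f\<close> unfolding flat_def sat_singleton_Imp by blast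
    then show "sat Y g" using \<open>flat g\<close> unfolding flat_def by blast
  qed
qed

lemma flat_neg: "flat (neg L f)"
  unfolding flat_def sat_neg by simp

lemma subst_neg: "subst s (neg L f) = neg L (subst s f)"
  unfolding neg_def by simp

lemma in_lang_neg: "in_lang L (neg L f) = in_lang L f"
  unfolding neg_def by (cases L) auto

lemma in_lang_subst: "in_lang L f \<Longrightarrow> (\<And>p. in_lang L (s p)) \<Longrightarrow> in_lang L (subst s f)"
  by (induction f) auto

definition proj_subst :: "form \<Rightarrow> valuation \<Rightarrow> nat \<Rightarrow> form" where
  "proj_subst T x\<^sub>0 p = (if x\<^sub>0 p then Imp T (Atom p) else Conj T (Atom p))"

lemma sat_singleton_proj_subst:
  "sat {v} (proj_subst T x\<^sub>0 p) = (if sat {v} T then v p else x\<^sub>0 p)"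
  unfolding proj_subst_def by (simp del: sat.simps(9))

lemma flat_proj_subst: "flat T \<Longrightarrow> flat (proj_subst T x\<^sub>0 p)"
  unfolding proj_subst_def by (simp add: flat_Imp flat_Conj flat_Atom)

lemma sat_iff_singletons: "flat f \<Longrightarrow> sat X f = (\<forall>v\<in>X. sat {v} f)"
  unfolding flat_def by blast

theorem projective_neg:
  assumes lang: "in_lang L f" and model: "sat {x\<^sub>0} (neg L f)"
  shows "projective L (flat_subst L) (neg L f)"
proof -
  define T where "T = neg L f"
  define s where "s = proj_subst T x\<^sub>0"
  have flat_s: "\<And>p. flat (s p)"
    unfolding T_def s_def by (simp add: flat_neg flat_proj_subst)
  have lang_T: "in_lang L T" and lang_s: "\<And>p. in_lang L (s p)"
    using lang unfolding T_def s_def proj_subst_def by (simp_all add: in_lang_neg)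
  have s_acts: "(\<lambda>p. sat {v} (s p)) = (if sat {v} T then v else x\<^sub>0)" for v
    unfolding s_def by (auto simp: sat_singleton_proj_subst)
  have "sat X (subst s T)" for X
    unfolding T_def subst_neg sat_neg sat_singleton_subst s_acts[unfolded T_def]
    using model by (simp add: sat_neg)
  then have valid: "entails L [] (subst s T)"
    unfolding entails_def using lang_T lang_s by (simp add: in_lang_subst)
  have "sat X (s p) = sat X (Atom p)" if "sat X T" for X p
  proof -
    have "sat {v} (s p) = v p" if "v \<in> X" for v
      using sat_downward_closed[OF \<open>sat X T\<close>] \<open>v \<in> X\<close>
      unfolding s_def sat_singleton_proj_subst by simp
    then show ?thesis
      using sat_iff_singletons[OF flat_s, of X p] by simp
  qed
  then have "entails L [T, s p] (Atom p) \<and> entails L [T, Atom p] (s p)" for p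
    unfolding entails_def using lang_T lang_s by auto
  with valid flat_s lang_s show ?thesis
    unfolding projective_def flat_subst_def T_def by blast
qed

lemma sat_singleton_big_disj: "sat {v} (big_disj fs) = (\<exists>f\<in>set fs. sat {v} f)"
  unfolding big_disj_def by (induction fs) auto

lemma sat_big_conj: "sat X (big_conj fs) = (\<forall>f\<in>set fs. sat X f)"
  unfolding big_conj_def by (induction fs) auto

lemma in_lang_big_conj: "(\<And>f. f \<in> set fs \<Longrightarrow> in_lang L f) \<Longrightarrow> in_lang L (big_conj fs)"
  unfolding big_conj_def by (induction fs) auto

lemma in_lang_big_disj: "(\<And>f. f \<in> set fs \<Longrightarrow> in_lang L f) \<Longrightarrow> in_lang L (big_disj fs)"
  unfolding big_disj_def by (induction fs) auto

lemma sat_singleton_lit: "sat {v} (lit L p b) = (v p = b)"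
  unfolding lit_def by (simp add: sat_neg)

lemma in_lang_lit: "in_lang L (lit L p b)"
  unfolding lit_def by (simp add: in_lang_neg)

theorem lemma4p3:
  fixes L :: logic and ps :: "nat list" and xs :: "valuation list"
  assumes "distinct ps" and "xs \<noteq> []"
  shows "projective L (flat_subst L) (Theta L ps xs)"
proof -
  define \<phi> where "\<phi> = big_disj (map (\<lambda>v. big_conj (map (\<lambda>p. lit L p (v p)) ps)) xs)"
  have "in_lang L (neg L \<phi>)"
    unfolding \<phi>_def in_lang_neg
    by (auto intro!: in_lang_big_disj in_lang_big_conj simp: in_lang_lit)
  moreover have "sat {hd xs} (neg L (neg L \<phi>))"
    using \<open>xs \<noteq> []\<close> unfolding \<phi>_def
    by (auto simp: sat_neg sat_singleton_big_disj sat_big_conj sat_singleton_lit)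
  ultimately show ?thesis
    unfolding Theta_def \<phi>_def[symmetric] by (rule projective_neg)
qed

end
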